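(* Assume in addition that $\rho(x,y)=0$ if and only if $x=y$. Let $X_1,X_2,\dots$ be i.i.d. with distribution $P$ (with joint law $\mathbb P=P^{\mathbb N}$). For any $D\geq0$ and any $\epsilon>0$ there exists a sequence of sets $C_n\subset A^n$, $n\ge1$, such that (i) $\frac1n\log M^n(C_n)\leq R(D)+\epsilon$ for all $n\geq1$; and (ii) $\mathbb P$-almost surely, $\rho_n(X_1^n,C_n)\leq D$ for all sufficiently large $n$.
   Context: Setting: $A$ is a finite set; $P$ is a probability mass function on $A$ with $P(a)>0$ for all $a\in A$; $\rho:A\times A\to[0,\infty)$; $M:A\to(0,\infty)$ is an arbitrary positive "mass" function. For $n\geq1$ and $x_1^n,y_1^n\in A^n$, $\rho_n(x_1^n,y_1^n)=\frac1n\sum_{i=1}^n\rho(x_i,y_i)$; $M^n(y_1^n)=\prod_{i=1}^n M(y_i)$ and $M^n(C)=\sum_{y_1^n\in C}M^n(y_1^n)$. For $C\subset A^n$, $\rho_n(x_1^n,C)=\min_{y_1^n\in C}\rho_n(x_1^n,y_1^n)$. Logarithms are natural. $H(\mu\|\nu)=\sum_s\mu(s)\log\frac{\mu(s)}{\nu(s)}$ is relative entropy. For a probability measure $Q$ on $A$ and $D\geq0$, ${\cal M}(P,Q,D)$ is the set of probability measures $W$ on $A\times A$ with first marginal $P$, second marginal $Q$, and $E_W[\rho(X,Y)]\leq D$; $I(P,Q,D)=\inf_{W\in{\cal M}(P,Q,D)}H(W\|P\times Q)$ ($+\infty$ if empty). $R(D)=R(D;P,M)=\inf_Q\{I(P,Q,D)+E_Q[\log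 M(Y)]\}$ over all probability distributions $Q$ on $A$. *)

theory Defs
  imports "HOL-Probability.Probability"
begin

text \<open>The finite alphabet A is the finite type 'a; elements of A^n are lists of length n.\<close>

definition rho_n :: "('a \<Rightarrow> 'a \<Rightarrow> real) \<Rightarrow> 'a list \<Rightarrow> 'a list \<Rightarrow> real" where
  "rho_n \<rho> xs ys = (\<Sum>i<length xs. \<rho> (xs ! i) (ys ! i)) / real (length xs)"

definition Mn :: "('a \<Rightarrow> real) \<Rightarrow> 'a list \<Rightarrow> real" where
  "Mn M ys = prod_list (map M ys)"

definition Mn_set :: "('a \<Rightarrow> real) \<Rightarrow> 'a list set \<Rightarrow> real" where
  "Mn_set M C = (\<Sum>ys\<in>C. Mn M ys)"

definition rel_ent :: "('b::finite) pmf \<Rightarrow> 'b pmf \<Rightarrow> ereal" where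
  "rel_ent \<mu> \<nu> =
     (if \<exists>s. pmf \<mu> s > 0 \<and> pmf \<nu> s = 0 then \<infinity>
      else ereal (\<Sum>s\<in>UNIV. if pmf \<mu> s = 0 then 0
                   else pmf \<mu> s * ln (pmf \<mu> s / pmf \<nu> s)))"

definition couplings :: "'a pmf \<Rightarrow> 'a pmf \<Rightarrow> ('a \<Rightarrow> 'a \<Rightarrow> real) \<Rightarrow> real \<Rightarrow> ('a \<times> 'a) pmf set" where
  "couplings P Q \<rho> D = {W. map_pmf fst W = P \<and> map_pmf snd W = Q \<and>
       measure_pmf.expectation W (\<lambda>(x, y). \<rho> x y) \<le> D}"

definition I_PQD :: "('a::finite) pmf \<Rightarrow> 'a pmf \<Rightarrow> ('a \<Rightarrow> 'a \<Rightarrow> real) \<Rightarrow> real \<Rightarrow> ereal" where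
  "I_PQD P Q \<rho> D = (INF W\<in>couplings P Q \<rho> D. rel_ent W (pair_pmf P Q))"

definition R_fun :: "('a::finite) pmf \<Rightarrow> ('a \<Rightarrow> real) \<Rightarrow> ('a \<Rightarrow> 'a \<Rightarrow> real) \<Rightarrow> real \<Rightarrow> ereal" where
  "R_fun P M \<rho> D = (INF Q\<in>(UNIV :: 'a pmf set).
      I_PQD P Q \<rho> D + ereal (measure_pmf.expectation Q (\<lambda>y. ln (M y))))"

end

theory Submission
  imports Defs "HOL-Probability.Probability"
begin

text \<open>
  If \<open>R(D)\<close> is finite, pick a coupling \<open>W\<close> of \<open>P\<close> and some \<open>Q\<close> that nearly attains it.
  Mixing \<open>W\<close> with the diagonal coupling of \<open>P\<close> costs little rate (mutual information is
  convex in the channel) and leaves slack in the distortion constraint when \<open>D > 0\<close>.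
  For the resulting joint law \<open>w\<close> with output marginal \<open>q\<close>, Chernoff's bound shows that
  pairs drawn from \<open>w\<^sup>n\<close> are jointly typical (information density, log-mass and distortion
  close to their means) except with exponentially small probability; by Markov's
  inequality, most source words \<open>x\<close> then have a conditionally typical set of
  \<open>q\<^sup>n\<close>-probability at least \<open>exp (-n(I + \<delta>)) / 2\<close>, since on typical pairs
  \<open>w\<^sup>n \<le> exp (n(I + \<delta>)) p\<^sup>n q\<^sup>n\<close>. A random codebook of \<open>exp (n(I + 2\<delta>))\<close> words drawn from
  \<open>q\<^sup>n\<close> misses such a set with probability at most \<open>exp (-n\<delta>/2)\<close>, so by averaging some
  fixed codebook leaves at most that much source probability uncovered; its codewords of
  mass at most \<open>exp (n(E + \<delta>))\<close> form a code of total mass at most \<open>exp (n(I + E + 4\<delta>))\<close>.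
  The failure probabilities are summable, and Borel--Cantelli gives the almost sure
  statement. If \<open>R(D) = \<infinity>\<close>, all words may be used.
\<close>

lemma Mn_Nil [simp]: "Mn f [] = 1"
  by (simp add: Mn_def)

lemma Mn_Cons [simp]: "Mn f (a # xs) = f a * Mn f xs"
  by (simp add: Mn_def)

lemma Mn_cong: "(\<And>a. a \<in> set xs \<Longrightarrow> f a = g a) \<Longrightarrow> Mn f xs = Mn g xs"
  by (simp add: Mn_def cong: map_cong)

lemma Mn_mult: "Mn (\<lambda>a. f a * g a) xs = Mn f xs * Mn g xs"
  by (induction xs) simp_all

lemma Mn_exp: "Mn (\<lambda>a. exp (g a)) xs = exp (\<Sum>a\<leftarrow>xs. g a)"
  by (induction xs) (simp_all add: exp_add)

lemma Mn_nonneg: "(\<And>a. f a \<ge> 0) \<Longrightarrow> Mn f xs \<ge> 0"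
  by (induction xs) simp_all

lemma Mn_eq_0_iff: "Mn f xs = 0 \<longleftrightarrow> (\<exists>a\<in>set xs. f a = 0)"
  by (induction xs) auto

lemma Mn_eq_prod_nth: "Mn f xs = (\<Prod>i<length xs. f (xs ! i))"
  by (induction xs) (simp_all add: prod.lessThan_Suc_shift del: prod.lessThan_Suc)

lemma Mn_fst_zip: "length x = length y \<Longrightarrow> Mn (\<lambda>s. f (fst s)) (zip x y) = Mn f x"
  by (simp add: Mn_def map_fst_zip flip: map_map[of f fst, unfolded comp_def])

lemma Mn_snd_zip: "length x = length y \<Longrightarrow> Mn (\<lambda>s. f (snd s)) (zip x y) = Mn f y"
  by (simp add: Mn_def map_snd_zip flip: map_map[of f snd, unfolded comp_def])

lemma sum_list_snd_zip: "length x = length y \<Longrightarrow> (\<Sum>s\<leftarrow>zip x y. f (snd s)) = (\<Sum>b\<leftarrow>y. f b)"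
  by (simp add: map_snd_zip flip: map_map[of f snd, unfolded comp_def])

lemma rho_n_eq_sum_list_zip:
  "length x = length y \<Longrightarrow> rho_n \<rho> x y = (\<Sum>s\<leftarrow>zip x y. \<rho> (fst s) (snd s)) / length x"
  by (simp add: rho_n_def sum_list_sum_nth atLeast0LessThan)

lemma finite_lists_length_UNIV [simp]: "finite {xs :: 'a::finite list. length xs = n}"
  using finite_lists_length_eq[of "UNIV :: 'a set" n] by simp

lemma finite_lists_length_filter [simp]: "finite {xs :: 'a::finite list. length xs = n \<and> Q xs}"
  by (rule finite_subset[OF _ finite_lists_length_UNIV[of n]]) auto

lemma sum_lists_length_filter:
  "(\<Sum>xs | length xs = n \<and> Q xs. f xs) = (\<Sum>xs | length xs = n. if Q xs then f xs else 0)"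
  for f :: "'a::finite list \<Rightarrow> 'b::comm_monoid_add"
  using sum.inter_filter[OF finite_lists_length_UNIV[of n], of f Q] by (simp add: conj_commute)

lemma Mn_set_lists_length_eq:
  assumes "finite S"
  shows "Mn_set f {xs. set xs \<subseteq> S \<and> length xs = n} = sum f S ^ n"
proof (induction n)
  case 0
  have "{xs. set xs \<subseteq> S \<and> length xs = 0} = {[]}"
    by auto
  then show ?case
    by (simp add: Mn_set_def)
next
  case (Suc n)
  let ?L = "{xs. set xs \<subseteq> S \<and> length xs = n}"
  have "inj_on (\<lambda>(xs, a). a # xs) (?L \<times> S)"
    by (auto simp: inj_on_def)
  then have "Mn_set f {xs. set xs \<subseteq> S \<and> length xs = Suc n} = (\<Sum>(xs, a)\<in>?L \<times> S. f a * Mn f xs)"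
    by (simp add: Mn_set_def lists_length_Suc_eq sum.reindex case_prod_unfold)
  also have "\<dots> = (\<Sum>xs\<in>?L. sum f S * Mn f xs)"
    by (simp add: sum.cartesian_product[symmetric] sum_distrib_right)
  also have "\<dots> = Mn_set f ?L * sum f S"
    by (simp add: Mn_set_def sum_distrib_left mult.commute)
  finally show ?case
    using Suc by simp
qed

corollary Mn_set_lists_length_UNIV:
  "Mn_set f {xs. length xs = n} = sum f (UNIV :: 'a::finite set) ^ n"
  using Mn_set_lists_length_eq[of "UNIV :: 'a set" f n] by simp

lemma Mn_set_nonneg: "(\<And>a. f a \<ge> 0) \<Longrightarrow> Mn_set f A \<ge> 0"
  by (simp add: Mn_set_def Mn_nonneg sum_nonneg)

lemma Mn_set_mono:
  assumes "finite B" "A \<subseteq> B" "\<And>a. f a \<ge> 0"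
  shows "Mn_set f A \<le> Mn_set f B"
  unfolding Mn_set_def using assms by (intro sum_mono2) (auto simp: Mn_nonneg)

lemma Mn_set_Un_le:
  assumes "finite A" "finite B" "\<And>a. f a \<ge> 0"
  shows "Mn_set f (A \<union> B) \<le> Mn_set f A + Mn_set f B"
  using assms Mn_set_nonneg[of f "A \<inter> B"] by (simp add: Mn_set_def sum_Un)

lemma sum_lists_zip:
  fixes F :: "('a::finite \<times> 'b::finite) list \<Rightarrow> real"
  shows "(\<Sum>z | length z = n. F z) = (\<Sum>x | length x = n. \<Sum>y | length y = n. F (zip x y))"
proof -
  have "bij_betw (\<lambda>(x, y). zip x y) ({x. length x = n} \<times> {y. length y = n}) {z. length z = n}"
    by (rule bij_betwI[where g = "\<lambda>z. (map fst z, map snd z)"]) (auto simp: zip_map_fst_snd)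
  from sum.reindex_bij_betw[OF this, of F]
  have "(\<Sum>z | length z = n. F z) = (\<Sum>(x, y)\<in>{x. length x = n} \<times> {y. length y = n}. F (zip x y))"
    by (simp add: case_prod_unfold)
  then show ?thesis
    by (simp add: sum.cartesian_product)
qed

lemma sum_Mn_zip:
  fixes w :: "'a \<times> 'b::finite \<Rightarrow> real"
  shows "(\<Sum>y | length y = length x. Mn w (zip x y)) = Mn (\<lambda>a. \<Sum>b\<in>UNIV. w (a, b)) x"
proof (induction x)
  case Nil
  have "{y :: 'b list. length y = 0} = {[]}"
    by auto
  then show ?case
    by simp
next
  case (Cons a x)
  let ?L = "{y :: 'b list. length y = length x}"
  have inj: "inj_on (\<lambda>(y, b). b # y) (?L \<times> UNIV)"
    by (auto simp: inj_on_def)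
  have "{y :: 'b list. length y = length (a # x)} = (\<lambda>(y, b). b # y) ` (?L \<times> UNIV)"
    using lists_length_Suc_eq[of UNIV "length x"] by simp
  then have "(\<Sum>y | length y = length (a # x). Mn w (zip (a # x) y))
      = (\<Sum>(y, b)\<in>?L \<times> UNIV. w (a, b) * Mn w (zip x y))"
    using sum.reindex[OF inj, of "\<lambda>y. Mn w (zip (a # x) y)"] by (simp add: case_prod_unfold)
  also have "\<dots> = (\<Sum>b\<in>UNIV. w (a, b)) * (\<Sum>y | length y = length x. Mn w (zip x y))"
    by (simp add: sum.cartesian_product[symmetric] sum_product sum.swap[of _ UNIV])
  finally show ?case
    using Cons by simp
qed

lemma exists_le_weighted_average:
  fixes wt F :: "'c \<Rightarrow> real"
  assumes "finite S" "\<And>c. c \<in> S \<Longrightarrow> 0 \<le> wt c" "sum wt S = 1" "(\<Sum>c\<in>S. wt c * F c) \<le> e"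
  shows "\<exists>c\<in>S. F c \<le> e"
proof (rule ccontr)
  assume "\<not> (\<exists>c\<in>S. F c \<le> e)"
  then have less: "e < F c" if "c \<in> S" for c
    using that by auto
  obtain c where "c \<in> S" "0 < wt c"
    using assms(2,3) by (metis less_eq_real_def sum.neutral zero_neq_one)
  moreover have "wt c' * e \<le> wt c' * F c'" if "c' \<in> S" for c'
    using that assms(2) less by (simp add: mult_left_mono less_imp_le)
  ultimately have "(\<Sum>c\<in>S. wt c * e) < (\<Sum>c\<in>S. wt c * F c)"
    using assms(1) less \<open>c \<in> S\<close> \<open>0 < wt c\<close>
    by (intro sum_strict_mono_ex1) (auto intro!: bexI[of _ c])
  then show False
    using assms(3,4) by (simp add: sum_distrib_right[symmetric])
qed

section \<open>Chernoff's bound and the log-sum inequality\<close>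

lemma exp_le_one_plus_square:
  fixes u :: real
  assumes "\<bar>u\<bar> \<le> 1"
  shows "exp u \<le> 1 + u + u\<^sup>2"
proof (cases "u \<ge> 0")
  case True
  then show ?thesis
    using exp_bound[of u] assms by simp
next
  case False
  have "(1 + u + u\<^sup>2) * (1 - u) = 1 - u ^ 3"
    by (simp add: algebra_simps power2_eq_square power3_eq_cube)
  moreover have "u ^ 3 \<le> 0"
    using False mult_nonneg_nonpos[of "u * u" u] by (simp add: power3_eq_cube)
  ultimately have "1 \<le> (1 + u + u\<^sup>2) * (1 - u)"
    by linarith
  then have "inverse (1 - u) \<le> 1 + u + u\<^sup>2"
    using False by (simp add: inverse_eq_divide divide_le_eq)
  moreover have "exp u \<le> inverse (1 - u)"
    using exp_ge_add_one_self[of "-u"] False le_imp_inverse_le[of "1 - u" "exp (-u)"]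
    by (simp add: exp_minus)
  ultimately show ?thesis
    by linarith
qed

lemma exponential_moment_le:
  fixes p g :: "'c::finite \<Rightarrow> real"
  assumes p_nonneg: "\<And>c. p c \<ge> 0" and p_sum: "sum p UNIV = 1"
    and g_bound: "\<And>c. \<bar>g c\<bar> \<le> B" and "0 \<le> t" "2 * t * B \<le> 1"
  shows "(\<Sum>c\<in>UNIV. p c * exp (t * g c)) \<le> exp (t * (\<Sum>c\<in>UNIV. p c * g c) + 4 * t\<^sup>2 * B\<^sup>2)"
proof -
  define m where "m = (\<Sum>c\<in>UNIV. p c * g c)"
  have "\<bar>m\<bar> \<le> (\<Sum>c\<in>UNIV. p c * B)"
    unfolding m_def
    by (rule order_trans[OF sum_abs sum_mono]) (simp add: abs_mult p_nonneg g_bound mult_left_mono)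
  then have "\<bar>m\<bar> \<le> B"
    by (simp add: sum_distrib_right[symmetric] p_sum)
  then have "\<bar>g c - m\<bar> \<le> 2 * B" for c
    using g_bound[of c] abs_triangle_ineq4[of "g c" m] by linarith
  then have small: "\<bar>t * (g c - m)\<bar> \<le> 2 * t * B" for c
    using mult_left_mono[of "\<bar>g c - m\<bar>" "2 * B" t] \<open>0 \<le> t\<close> by (simp add: abs_mult)
  have "(\<Sum>c\<in>UNIV. p c * exp (t * (g c - m)))
      \<le> (\<Sum>c\<in>UNIV. p c * (1 + t * (g c - m) + (2 * t * B)\<^sup>2))"
  proof (intro sum_mono mult_left_mono p_nonneg)
    fix c
    have "exp (t * (g c - m)) \<le> 1 + t * (g c - m) + (t * (g c - m))\<^sup>2"
      using small[of c] \<open>2 * t * B \<le> 1\<close> by (intro exp_le_one_plus_square) simp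
    also have "(t * (g c - m))\<^sup>2 \<le> (2 * t * B)\<^sup>2"
      using small[of c] by (metis abs_le_square_iff abs_of_nonneg abs_ge_zero order_trans)
    finally show "exp (t * (g c - m)) \<le> 1 + t * (g c - m) + (2 * t * B)\<^sup>2"
      by simp
  qed
  also have "\<dots> = 1 + 4 * t\<^sup>2 * B\<^sup>2"
    by (simp add: algebra_simps sum.distrib sum_subtractf sum_distrib_left[symmetric]
        sum_distrib_right[symmetric] p_sum m_def power2_eq_square)
  also have "\<dots> \<le> exp (4 * t\<^sup>2 * B\<^sup>2)"
    by (rule exp_ge_add_one_self)
  finally have "exp (t * m) * (\<Sum>c\<in>UNIV. p c * exp (t * (g c - m))) \<le> exp (t * m) * exp (4 * t\<^sup>2 * B\<^sup>2)"
    by simp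
  then show ?thesis
    by (simp add: m_def sum_distrib_left exp_add[symmetric] algebra_simps)
qed

lemma Mn_set_upper_deviation_le:
  fixes p g :: "'c::finite \<Rightarrow> real"
  assumes p_nonneg: "\<And>c. p c \<ge> 0" and p_sum: "sum p UNIV = 1"
    and g_bound: "\<And>c. \<bar>g c\<bar> \<le> B" and "0 < \<delta>" "\<delta> \<le> B"
  shows "Mn_set p {z. length z = n \<and> n * ((\<Sum>c\<in>UNIV. p c * g c) + \<delta>) \<le> (\<Sum>c\<leftarrow>z. g c)}
           \<le> exp (- (n * \<delta>\<^sup>2 / (16 * B\<^sup>2)))"
proof -
  define m where "m = (\<Sum>c\<in>UNIV. p c * g c)"
  define t where "t = \<delta> / (8 * B\<^sup>2)"
  have "B > 0" "t > 0"
    using assms by (auto simp: t_def)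
  have "2 * t * B \<le> 1"
    using assms \<open>B > 0\<close> by (simp add: t_def power2_eq_square field_simps)
  let ?L = "{z :: 'c list. length z = n}"
  let ?S = "{z. length z = n \<and> n * (m + \<delta>) \<le> (\<Sum>c\<leftarrow>z. g c)}"
  have "Mn_set p ?S \<le> (\<Sum>z\<in>?S. Mn p z * exp (t * ((\<Sum>c\<leftarrow>z. g c) - n * (m + \<delta>))))"
    unfolding Mn_set_def
    by (intro sum_mono mult_le_cancel_left1[THEN iffD2])
      (use \<open>t > 0\<close> in \<open>auto simp: Mn_nonneg p_nonneg leD\<close>)
  also have "\<dots> \<le> (\<Sum>z\<in>?L. Mn p z * exp (t * ((\<Sum>c\<leftarrow>z. g c) - n * (m + \<delta>))))"
    by (intro sum_mono2 finite_lists_length_UNIV) (auto simp: Mn_nonneg p_nonneg)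
  also have "\<dots> = (\<Sum>z\<in>?L. exp (- (t * n * (m + \<delta>))) * Mn (\<lambda>c. p c * exp (t * g c)) z)"
    by (intro sum.cong refl) (simp add: Mn_mult Mn_exp sum_list_const_mult right_diff_distrib
        exp_diff exp_minus exp_add field_simps)
  also have "\<dots> = exp (- (t * n * (m + \<delta>))) * Mn_set (\<lambda>c. p c * exp (t * g c)) ?L"
    by (simp add: Mn_set_def sum_distrib_left)
  also have "\<dots> \<le> exp (- (t * n * (m + \<delta>))) * exp (t * m + 4 * t\<^sup>2 * B\<^sup>2) ^ n"
    unfolding Mn_set_lists_length_UNIV m_def
    using exponential_moment_le[OF assms(1-3) less_imp_le[OF \<open>t > 0\<close>] \<open>2 * t * B \<le> 1\<close>]
    by (intro mult_left_mono power_mono) (auto intro!: sum_nonneg simp: p_nonneg)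
  also have "\<dots> = exp (- (n * \<delta>\<^sup>2 / (16 * B\<^sup>2)))"
    using \<open>B > 0\<close>
    by (simp add: exp_of_nat_mult[symmetric] exp_add[symmetric] t_def power2_eq_square field_simps)
  finally show ?thesis
    unfolding m_def .
qed

lemma diff_le_mult_ln_divide:
  fixes a b :: real
  assumes "0 \<le> a" "0 \<le> b" "0 < a \<Longrightarrow> 0 < b"
  shows "a - b \<le> a * ln (a / b)"
proof (cases "a = 0")
  case False
  then have "0 < a" "0 < b"
    using assms by auto
  then have "a * ln (b / a) \<le> a * (b / a - 1)"
    by (intro mult_left_mono ln_le_minus_one) auto
  then show ?thesis
    using \<open>0 < a\<close> \<open>0 < b\<close> by (simp add: ln_div right_diff_distrib)
qed (use assms in simp)

lemma log_sum_inequality: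
  fixes a b :: "'i \<Rightarrow> real"
  assumes "finite S" and a_nonneg: "\<And>i. i \<in> S \<Longrightarrow> 0 \<le> a i" and b_nonneg: "\<And>i. i \<in> S \<Longrightarrow> 0 \<le> b i"
    and support: "\<And>i. i \<in> S \<Longrightarrow> 0 < a i \<Longrightarrow> 0 < b i"
  shows "sum a S * ln (sum a S / sum b S) \<le> (\<Sum>i\<in>S. a i * ln (a i / b i))"
proof (cases "sum a S = 0")
  case True
  then have "a i = 0" if "i \<in> S" for i
    using that \<open>finite S\<close> a_nonneg sum_nonneg_eq_0_iff by blast
  then show ?thesis
    using True by simp
next
  case False
  define A B where "A = sum a S" and "B = sum b S"
  obtain j where "j \<in> S" "a j > 0"
    using False a_nonneg by (metis less_eq_real_def sum.neutral)
  then have "0 < b j"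
    using support by blast
  moreover have "b j \<le> B"
    unfolding B_def using \<open>j \<in> S\<close> \<open>finite S\<close> b_nonneg by (intro member_le_sum) auto
  ultimately have "0 < B"
    by simp
  have "0 < A"
    using False a_nonneg sum_nonneg[of S a] by (simp add: A_def)
  have "a i - b i * A / B + a i * ln (A / B) \<le> a i * ln (a i / b i)" if "i \<in> S" for i
  proof (cases "a i = 0")
    case False
    then have "0 < a i" "0 < b i"
      using that a_nonneg support by (auto simp: less_eq_real_def)
    have "a i - b i * A / B \<le> a i * ln (a i / (b i * A / B))"
      using \<open>0 < a i\<close> \<open>0 < b i\<close> \<open>0 < A\<close> \<open>0 < B\<close> by (intro diff_le_mult_ln_divide) auto
    also have "\<dots> = a i * ln (a i / b i) - a i * ln (A / B)"
      using \<open>0 < a i\<close> \<open>0 < b i\<close> \<open>0 < A\<close> \<open>0 < B\<close> by (simp add: ln_div ln_mult algebra_simps)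
    finally show ?thesis
      by simp
  qed (use that b_nonneg \<open>0 < A\<close> \<open>0 < B\<close> in simp)
  then have "(\<Sum>i\<in>S. a i - b i * A / B + a i * ln (A / B)) \<le> (\<Sum>i\<in>S. a i * ln (a i / b i))"
    by (rule sum_mono)
  moreover have "(\<Sum>i\<in>S. a i - b i * A / B + a i * ln (A / B)) = A * ln (A / B)"
    using \<open>0 < B\<close> by (simp add: sum.distrib sum_subtractf sum_divide_distrib[symmetric]
        sum_distrib_right[symmetric] A_def B_def)
  ultimately show ?thesis
    by (simp add: A_def B_def)
qed

lemma mult_ln_divide_convex:
  fixes x1 x2 y1 y2 \<theta> :: real
  assumes "0 \<le> x1" "0 \<le> x2" "0 \<le> y1" "0 \<le> y2" "0 < x1 \<Longrightarrow> 0 < y1" "0 < x2 \<Longrightarrow> 0 < y2"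
    and "0 \<le> \<theta>" "\<theta> \<le> 1"
  shows "((1 - \<theta>) * x1 + \<theta> * x2) * ln (((1 - \<theta>) * x1 + \<theta> * x2) / ((1 - \<theta>) * y1 + \<theta> * y2))
           \<le> (1 - \<theta>) * (x1 * ln (x1 / y1)) + \<theta> * (x2 * ln (x2 / y2))"
proof -
  let ?a = "\<lambda>i. if i then (1 - \<theta>) * x1 else \<theta> * x2"
  let ?b = "\<lambda>i. if i then (1 - \<theta>) * y1 else \<theta> * y2"
  have "sum ?a UNIV * ln (sum ?a UNIV / sum ?b UNIV) \<le> (\<Sum>i\<in>UNIV. ?a i * ln (?a i / ?b i))"
    using assms by (intro log_sum_inequality) (auto simp: zero_less_mult_iff)
  then show ?thesis
    by (cases "\<theta> = 0"; cases "\<theta> = 1") (simp_all add: UNIV_bool add.commute mult.assoc)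
qed

section \<open>Prefixes of i.i.d. sequences\<close>

lemma prefix_eq_prod_emb:
  assumes "length x = n"
  shows "{\<omega>. map \<omega> [0..<n] = x} = prod_emb UNIV (\<lambda>_. measure_pmf P) {..<n} (\<Pi>\<^sub>E i\<in>{..<n}. {x ! i})"
proof -
  have "map \<omega> [0..<n] = x \<longleftrightarrow> (\<forall>i<n. \<omega> i = x ! i)" for \<omega> :: "nat \<Rightarrow> 'a"
    using assms by (auto simp: list_eq_iff_nth_eq)
  then show ?thesis
    by (auto simp: prod_emb_def PiE_iff space_PiM)
qed

lemma
  fixes P :: "'a::finite pmf"
  assumes S: "S \<subseteq> {x. length x = n}"
  shows sets_PiM_prefix: "{\<omega>. map \<omega> [0..<n] \<in> S} \<in> sets (PiM UNIV (\<lambda>_::nat. measure_pmf P))"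
    and measure_PiM_prefix:
      "measure (PiM UNIV (\<lambda>_::nat. measure_pmf P)) {\<omega>. map \<omega> [0..<n] \<in> S} = Mn_set (pmf P) S"
proof -
  let ?M = "PiM UNIV (\<lambda>_::nat. measure_pmf P)"
  let ?E = "\<lambda>x. {\<omega>. map \<omega> [0..<n] = x}"
  interpret prob_space ?M
    by (intro prob_space_PiM) (simp add: prob_space_measure_pmf)
  have "finite S"
    using S finite_lists_length_UNIV by (rule finite_subset)
  have E_sets: "?E x \<in> sets ?M" if "x \<in> S" for x
  proof -
    have "length x = n"
      using that S by auto
    then show ?thesis
      unfolding prefix_eq_prod_emb[OF \<open>length x = n\<close>, of P] by (intro sets_PiM_I) auto
  qed
  have prefix_eq: "{\<omega>. map \<omega> [0..<n] \<in> S} = (\<Union>x\<in>S. ?E x)"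
    by auto
  have "disjoint_family_on ?E S"
    by (auto simp: disjoint_family_on_def)
  then have measure_Union: "measure ?M (\<Union>x\<in>S. ?E x) = (\<Sum>x\<in>S. measure ?M (?E x))"
    using \<open>finite S\<close> E_sets by (intro measure_finite_Union) auto
  have measure_E: "measure ?M (?E x) = Mn (pmf P) x" if "x \<in> S" for x
  proof -
    have "length x = n"
      using that S by auto
    have "emeasure ?M (?E x) = (\<Prod>i<n. emeasure (measure_pmf P) {x ! i})"
      unfolding prefix_eq_prod_emb[OF \<open>length x = n\<close>, of P]
      by (rule emeasure_PiM_emb) (auto simp: prob_space_measure_pmf)
    then show ?thesis
      using \<open>length x = n\<close>
      by (simp add: measure_def emeasure_pmf_single prod_ennreal Mn_eq_prod_nth prod_nonneg)
  qed
  show "{\<omega>. map \<omega> [0..<n] \<in> S} \<in> sets ?M"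
    unfolding prefix_eq using \<open>finite S\<close> E_sets by (intro sets.finite_UN) auto
  show "measure ?M {\<omega>. map \<omega> [0..<n] \<in> S} = Mn_set (pmf P) S"
    unfolding prefix_eq measure_Union Mn_set_def by (rule sum.cong[OF refl measure_E])
qed

lemma AE_eventually_prefix_in:
  fixes P :: "'a::finite pmf" and S :: "nat \<Rightarrow> 'a list set"
  assumes "summable (\<lambda>n. Mn_set (pmf P) {x. length x = n \<and> x \<notin> S n})"
  shows "AE \<omega> in PiM UNIV (\<lambda>_::nat. measure_pmf P). eventually (\<lambda>n. map \<omega> [0..<n] \<in> S n) sequentially"
proof -
  let ?M = "PiM UNIV (\<lambda>_::nat. measure_pmf P)"
  interpret prob_space ?M
    by (intro prob_space_PiM) (simp add: prob_space_measure_pmf)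
  define A where "A n = {\<omega>. map \<omega> [0..<n] \<in> {x. length x = n \<and> x \<notin> S n}}" for n
  have A_sets: "A n \<in> events" for n
    unfolding A_def by (rule sets_PiM_prefix) auto
  have "measure ?M (A n) = Mn_set (pmf P) {x. length x = n \<and> x \<notin> S n}" for n
    unfolding A_def by (rule measure_PiM_prefix) auto
  then have "AE \<omega> in ?M. eventually (\<lambda>n. \<omega> \<in> space ?M - A n) sequentially"
    using assms by (intro borel_cantelli_AE1[OF A_sets]) (simp_all add: emeasure_eq_measure)
  moreover have "map \<omega> [0..<n] \<in> S n" if "\<omega> \<notin> A n" for \<omega> n
    using that by (simp add: A_def)
  ultimately show ?thesis
    by (auto elim!: eventually_mono)
qed

section \<open>Random coding for a test channel\<close>

definition fst_marginal :: "('a \<times> 'b::finite \<Rightarrow> real) \<Rightarrow> 'a \<Rightarrow> real" where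
  "fst_marginal w a = (\<Sum>b\<in>UNIV. w (a, b))"

definition snd_marginal :: "('a::finite \<times> 'b \<Rightarrow> real) \<Rightarrow> 'b \<Rightarrow> real" where
  "snd_marginal w b = (\<Sum>a\<in>UNIV. w (a, b))"

definition mutual_information :: "('a::finite \<times> 'b::finite \<Rightarrow> real) \<Rightarrow> real" where
  "mutual_information w =
     (\<Sum>s\<in>UNIV. w s * ln (w s / (fst_marginal w (fst s) * snd_marginal w (snd s))))"

definition mean_log_mass :: "('b \<Rightarrow> real) \<Rightarrow> ('a::finite \<times> 'b::finite \<Rightarrow> real) \<Rightarrow> real" where
  "mean_log_mass M w = (\<Sum>s\<in>UNIV. w s * ln (M (snd s)))"

definition mean_distortion :: "('a \<Rightarrow> 'b \<Rightarrow> real) \<Rightarrow> ('a::finite \<times> 'b::finite \<Rightarrow> real) \<Rightarrow> real" where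
  "mean_distortion \<rho> w = (\<Sum>s\<in>UNIV. w s * \<rho> (fst s) (snd s))"

lemma le_fst_marginal: "(\<And>s. 0 \<le> w s) \<Longrightarrow> w s \<le> fst_marginal w (fst s)"
  for w :: "'a \<times> 'b::finite \<Rightarrow> real"
  by (cases s) (auto simp: fst_marginal_def intro!: member_le_sum)

lemma le_snd_marginal: "(\<And>s. 0 \<le> w s) \<Longrightarrow> w s \<le> snd_marginal w (snd s)"
  for w :: "'a::finite \<times> 'b \<Rightarrow> real"
  by (cases s) (auto simp: snd_marginal_def intro!: member_le_sum)

lemma sum_UNIV_prod: "(\<Sum>s\<in>UNIV. f s) = (\<Sum>a\<in>UNIV. \<Sum>b\<in>UNIV. f (a, b))"
  by (simp add: sum.cartesian_product UNIV_Times_UNIV[symmetric] del: UNIV_Times_UNIV)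

locale test_channel =
  fixes P :: "'a::finite pmf" and w :: "'a \<times> 'a \<Rightarrow> real" and \<rho> :: "'a \<Rightarrow> 'a \<Rightarrow> real"
    and M :: "'a \<Rightarrow> real" and D \<delta> :: real
  assumes w_nonneg: "\<And>s. 0 \<le> w s"
    and fst_marginal_w: "fst_marginal w = pmf P"
    and M_pos: "\<And>b. 0 < M b"
    and \<delta>_pos: "0 < \<delta>"
    and distortion_slack: "mean_distortion \<rho> w + \<delta> \<le> D \<or> (\<forall>s. 0 < w s \<longrightarrow> \<rho> (fst s) (snd s) \<le> D)"
      \<comment> \<open>the second alternative serves \<open>D = 0\<close>, where no slack is available\<close>
begin

abbreviation "q \<equiv> snd_marginal w"
abbreviation "I \<equiv> mutual_information w"
abbreviation "E \<equiv> mean_log_mass M w"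

definition info_density :: "'a \<times> 'a \<Rightarrow> real" where
  "info_density s = ln (w s / (pmf P (fst s) * q (snd s)))"
  \<comment> \<open>junk value \<open>0\<close> where \<open>w s = 0\<close>; such pairs carry no \<open>w\<close>-mass\<close>

definition value_bound :: real where
  "value_bound = \<delta> + (\<Sum>s\<in>UNIV. \<bar>info_density s\<bar> + \<bar>\<rho> (fst s) (snd s)\<bar> + \<bar>ln (M (snd s))\<bar>)"

definition deviation_exponent :: real where
  "deviation_exponent = \<delta>\<^sup>2 / (16 * value_bound\<^sup>2)"

definition typical :: "('a \<times> 'a) list \<Rightarrow> bool" where
  "typical z \<longleftrightarrow> (\<Sum>s\<leftarrow>z. info_density s) \<le> length z * (I + \<delta>)
     \<and> (\<Sum>s\<leftarrow>z. ln (M (snd s))) \<le> length z * (E + \<delta>)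
     \<and> (\<Sum>s\<leftarrow>z. \<rho> (fst s) (snd s)) \<le> length z * D"

lemma w_le_marginals: "w s \<le> pmf P (fst s)" "w s \<le> q (snd s)"
  using le_fst_marginal[of w s] le_snd_marginal[of w s] w_nonneg by (simp_all add: fst_marginal_w)

lemma q_nonneg: "0 \<le> q b"
  by (simp add: snd_marginal_def sum_nonneg w_nonneg)

lemma sum_w: "sum w UNIV = 1"
proof -
  have "(\<Sum>a\<in>UNIV. fst_marginal w a) = 1"
    by (simp add: fst_marginal_w sum_pmf_eq_1)
  then show ?thesis
    by (simp add: sum_UNIV_prod fst_marginal_def)
qed

lemma sum_q: "sum q UNIV = 1"
proof -
  have "sum q UNIV = (\<Sum>a\<in>UNIV. \<Sum>b\<in>UNIV. w (a, b))"
    unfolding snd_marginal_def by (rule sum.swap)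
  then show ?thesis
    using sum_w by (simp add: sum_UNIV_prod)
qed

lemma Mn_set_q_lists: "Mn_set q {y. length y = n} = 1"
  by (simp add: Mn_set_lists_length_UNIV sum_q)

lemma I_eq_mean_info_density: "I = (\<Sum>s\<in>UNIV. w s * info_density s)"
  by (simp add: mutual_information_def info_density_def fst_marginal_w)

lemma mutual_information_nonneg: "0 \<le> I"
proof -
  have "sum w UNIV * ln (sum w UNIV / (\<Sum>s\<in>UNIV. pmf P (fst s) * q (snd s))) \<le> I"
    unfolding I_eq_mean_info_density info_density_def
  proof (rule log_sum_inequality)
    show "0 < pmf P (fst s) * q (snd s)" if "0 < w s" for s
      using that w_le_marginals[of s] by simp
  qed (auto simp: w_nonneg q_nonneg)
  moreover have "(\<Sum>s\<in>UNIV. pmf P (fst s) * q (snd s)) = 1"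
    by (simp add: sum_UNIV_prod sum_product[symmetric] sum_q sum_pmf_eq_1)
  ultimately show ?thesis
    by (simp add: sum_w)
qed

lemma w_eq_exp_info_density: "0 < w s \<Longrightarrow> w s = exp (info_density s) * pmf P (fst s) * q (snd s)"
  using w_le_marginals[of s] by (simp add: info_density_def)

lemma value_bound_ge:
  "\<bar>info_density s\<bar> \<le> value_bound" "\<bar>\<rho> (fst s) (snd s)\<bar> \<le> value_bound"
  "\<bar>ln (M (snd s))\<bar> \<le> value_bound" "\<delta> \<le> value_bound"
proof -
  have "\<bar>info_density s\<bar> + \<bar>\<rho> (fst s) (snd s)\<bar> + \<bar>ln (M (snd s))\<bar>
      \<le> (\<Sum>s\<in>UNIV. \<bar>info_density s\<bar> + \<bar>\<rho> (fst s) (snd s)\<bar> + \<bar>ln (M (snd s))\<bar>)"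
    by (rule member_le_sum) auto
  then have "\<bar>info_density s\<bar> + \<bar>\<rho> (fst s) (snd s)\<bar> + \<bar>ln (M (snd s))\<bar> \<le> value_bound - \<delta>"
    by (simp add: value_bound_def)
  then show "\<bar>info_density s\<bar> \<le> value_bound" "\<bar>\<rho> (fst s) (snd s)\<bar> \<le> value_bound"
    "\<bar>ln (M (snd s))\<bar> \<le> value_bound" "\<delta> \<le> value_bound"
    using abs_ge_zero[of "info_density s"] abs_ge_zero[of "\<rho> (fst s) (snd s)"]
      abs_ge_zero[of "ln (M (snd s))"] \<delta>_pos by linarith+
qed

lemma upper_deviation_prob_le:
  assumes "\<And>s. \<bar>g s\<bar> \<le> value_bound"
  shows "Mn_set w {z. length z = n \<and> n * ((\<Sum>s\<in>UNIV. w s * g s) + \<delta>) \<le> (\<Sum>s\<leftarrow>z. g s)}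
           \<le> exp (- (n * deviation_exponent))"
  unfolding deviation_exponent_def
  using Mn_set_upper_deviation_le[OF w_nonneg sum_w assms \<delta>_pos value_bound_ge(4)] by simp

lemma excess_distortion_prob_le:
  "Mn_set w {z. length z = n \<and> n * D < (\<Sum>s\<leftarrow>z. \<rho> (fst s) (snd s))} \<le> exp (- (n * deviation_exponent))"
  using distortion_slack
proof
  assume "mean_distortion \<rho> w + \<delta> \<le> D"
  then have "n * (mean_distortion \<rho> w + \<delta>) \<le> n * D"
    by (intro mult_left_mono) auto
  then have "Mn_set w {z. length z = n \<and> n * D < (\<Sum>s\<leftarrow>z. \<rho> (fst s) (snd s))}
      \<le> Mn_set w {z. length z = n \<and> n * (mean_distortion \<rho> w + \<delta>) \<le> (\<Sum>s\<leftarrow>z. \<rho> (fst s) (snd s))}"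
    by (intro Mn_set_mono) (auto simp: w_nonneg)
  also have "\<dots> \<le> exp (- (n * deviation_exponent))"
    unfolding mean_distortion_def by (rule upper_deviation_prob_le) (rule value_bound_ge)
  finally show ?thesis .
next
  assume "\<forall>s. 0 < w s \<longrightarrow> \<rho> (fst s) (snd s) \<le> D"
  then have "Mn w z = 0" if exceeds: "length z * D < (\<Sum>s\<leftarrow>z. \<rho> (fst s) (snd s))" for z
  proof -
    obtain s where "s \<in> set z" "D < \<rho> (fst s) (snd s)"
      using exceeds sum_list_mono[of z "\<lambda>s. \<rho> (fst s) (snd s)" "\<lambda>_. D"]
      by (force simp: sum_list_triv)
    then have "\<not> 0 < w s"
      using \<open>\<forall>s. 0 < w s \<longrightarrow> _\<close> by (meson not_le)
    then have "w s = 0"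
      using w_nonneg[of s] by simp
    then show ?thesis
      using \<open>s \<in> set z\<close> by (auto simp: Mn_eq_0_iff)
  qed
  then show ?thesis
    by (simp add: Mn_set_def)
qed

lemma atypical_prob_le: "Mn_set w {z. length z = n \<and> \<not> typical z} \<le> 3 * exp (- (n * deviation_exponent))"
proof -
  define A1 where "A1 = {z :: ('a \<times> 'a) list. length z = n \<and> n * (I + \<delta>) \<le> (\<Sum>s\<leftarrow>z. info_density s)}"
  define A2 where "A2 = {z :: ('a \<times> 'a) list. length z = n \<and> n * (E + \<delta>) \<le> (\<Sum>s\<leftarrow>z. ln (M (snd s)))}"
  define A3 where "A3 = {z :: ('a \<times> 'a) list. length z = n \<and> n * D < (\<Sum>s\<leftarrow>z. \<rho> (fst s) (snd s))}"
  have fin: "finite A1" "finite A2" "finite A3"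
    unfolding A1_def A2_def A3_def by (rule finite_lists_length_filter)+
  have "{z. length z = n \<and> \<not> typical z} \<subseteq> A1 \<union> A2 \<union> A3"
    by (auto simp: typical_def A1_def A2_def A3_def)
  then have "Mn_set w {z. length z = n \<and> \<not> typical z} \<le> Mn_set w (A1 \<union> A2 \<union> A3)"
    using fin by (intro Mn_set_mono) (auto simp: w_nonneg)
  also have "\<dots> \<le> Mn_set w (A1 \<union> A2) + Mn_set w A3"
    using fin by (intro Mn_set_Un_le) (auto simp: w_nonneg)
  also have "\<dots> \<le> Mn_set w A1 + Mn_set w A2 + Mn_set w A3"
    using fin Mn_set_Un_le[of A1 A2 w] by (simp add: w_nonneg)
  also have "\<dots> \<le> 3 * exp (- (n * deviation_exponent))"
    using upper_deviation_prob_le[of info_density n] upper_deviation_prob_le[of "\<lambda>s. ln (M (snd s))" n]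
      excess_distortion_prob_le[of n]
    unfolding A1_def A2_def A3_def by (simp add: I_eq_mean_info_density mean_log_mass_def value_bound_ge)
  finally show ?thesis .
qed

definition cond_typical :: "'a list \<Rightarrow> 'a list set" where
  "cond_typical x = {y. length y = length x \<and> typical (zip x y)}"

definition coverable :: "'a list \<Rightarrow> bool" where
  "coverable x \<longleftrightarrow> exp (- (length x * (I + \<delta>))) / 2 \<le> Mn_set q (cond_typical x)"

lemma joint_le_of_typical:
  assumes "length y = length x" "typical (zip x y)"
  shows "Mn w (zip x y) \<le> exp (length x * (I + \<delta>)) * Mn (pmf P) x * Mn q y"
proof (cases "\<exists>s\<in>set (zip x y). w s = 0")
  case True
  then have "Mn w (zip x y) = 0"
    by (simp add: Mn_eq_0_iff)
  then show ?thesis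
    by (simp add: Mn_nonneg q_nonneg)
next
  case False
  then have "Mn w (zip x y) = Mn (\<lambda>s. exp (info_density s) * (pmf P (fst s) * q (snd s))) (zip x y)"
    using w_nonneg by (intro Mn_cong) (metis w_eq_exp_info_density less_eq_real_def mult.assoc)
  also have "\<dots> = exp (\<Sum>s\<leftarrow>zip x y. info_density s) * Mn (pmf P) x * Mn q y"
    using assms(1) by (simp add: Mn_mult Mn_exp Mn_fst_zip Mn_snd_zip mult.assoc)
  also have "\<dots> \<le> exp (length x * (I + \<delta>)) * Mn (pmf P) x * Mn q y"
    using assms by (intro mult_right_mono) (auto simp: typical_def Mn_nonneg q_nonneg)
  finally show ?thesis .
qed

lemma sum_joint_eq_marginal: "(\<Sum>y | length y = length x. Mn w (zip x y)) = Mn (pmf P) x"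
  using sum_Mn_zip[of w x] fst_marginal_w by (simp add: fst_marginal_def[abs_def])

lemma uncoverable_le_atypical:
  assumes "length x = n" "\<not> coverable x"
  shows "Mn (pmf P) x \<le> 2 * (\<Sum>y | length y = n \<and> \<not> typical (zip x y). Mn w (zip x y))"
proof -
  let ?L = "{y :: 'a list. length y = n}" and ?G = "cond_typical x"
  have "?G \<subseteq> ?L"
    using assms by (auto simp: cond_typical_def)
  have "(\<Sum>y\<in>?G. Mn w (zip x y)) \<le> (\<Sum>y\<in>?G. exp (n * (I + \<delta>)) * Mn (pmf P) x * Mn q y)"
    using assms(1) joint_le_of_typical by (intro sum_mono) (force simp: cond_typical_def)
  also have "\<dots> = Mn (pmf P) x * (exp (n * (I + \<delta>)) * Mn_set q ?G)"
    by (simp add: Mn_set_def sum_distrib_left mult_ac)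
  also have "\<dots> \<le> Mn (pmf P) x * (1 / 2)"
  proof (intro mult_left_mono)
    have "exp (n * (I + \<delta>)) * Mn_set q ?G \<le> exp (n * (I + \<delta>)) * (exp (- (n * (I + \<delta>))) / 2)"
      using assms by (intro mult_left_mono) (auto simp: coverable_def)
    then show "exp (n * (I + \<delta>)) * Mn_set q ?G \<le> 1 / 2"
      by (simp add: exp_minus)
  qed (simp add: Mn_nonneg)
  finally have "(\<Sum>y\<in>?G. Mn w (zip x y)) \<le> Mn (pmf P) x / 2"
    by simp
  moreover have "Mn (pmf P) x = (\<Sum>y\<in>?L - ?G. Mn w (zip x y)) + (\<Sum>y\<in>?G. Mn w (zip x y))"
    using sum_joint_eq_marginal[of x] assms(1) \<open>?G \<subseteq> ?L\<close>
    by (simp add: sum.subset_diff[OF \<open>?G \<subseteq> ?L\<close> finite_lists_length_UNIV])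
  moreover have "?L - ?G = {y. length y = n \<and> \<not> typical (zip x y)}"
    using assms by (auto simp: cond_typical_def)
  ultimately show ?thesis
    by simp
qed

lemma uncoverable_prob_le: "Mn_set (pmf P) {x. length x = n \<and> \<not> coverable x} \<le> 6 * exp (- (n * deviation_exponent))"
proof -
  let ?F = "\<lambda>z. if \<not> typical z then Mn w z else 0"
  have "Mn_set (pmf P) {x. length x = n \<and> \<not> coverable x}
      \<le> (\<Sum>x | length x = n \<and> \<not> coverable x. 2 * (\<Sum>y | length y = n. ?F (zip x y)))"
    unfolding Mn_set_def using uncoverable_le_atypical
    by (intro sum_mono) (force simp: sum_lists_length_filter)
  also have "\<dots> \<le> (\<Sum>x | length x = n. 2 * (\<Sum>y | length y = n. ?F (zip x y)))"
    by (intro sum_mono2 finite_lists_length_UNIV) (auto intro!: sum_nonneg simp: Mn_nonneg w_nonneg)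
  also have "\<dots> = 2 * Mn_set w {z. length z = n \<and> \<not> typical z}"
    by (simp add: Mn_set_def sum_lists_length_filter[where f = "Mn w"] sum_lists_zip[of ?F]
        sum_distrib_left)
  also have "\<dots> \<le> 6 * exp (- (n * deviation_exponent))"
    using atypical_prob_le[of n] by simp
  finally show ?thesis .
qed

definition codebook_size :: "nat \<Rightarrow> nat" where
  "codebook_size n = nat \<lceil>exp (n * (I + 2 * \<delta>))\<rceil>"

definition codebooks :: "nat \<Rightarrow> 'a list list set" where
  "codebooks n = {c. set c \<subseteq> {y. length y = n} \<and> length c = codebook_size n}"

definition missed :: "nat \<Rightarrow> 'a list list \<Rightarrow> real" where
  "missed n c = Mn_set (pmf P) {x. length x = n \<and> coverable x \<and> set c \<inter> cond_typical x = {}}"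

lemma finite_codebooks: "finite (codebooks n)"
  unfolding codebooks_def by (intro finite_lists_length_eq finite_lists_length_UNIV)

lemma Mn_set_codebooks: "Mn_set (Mn q) (codebooks n) = 1"
  unfolding codebooks_def
  by (simp add: Mn_set_lists_length_eq[OF finite_lists_length_UNIV] Mn_set_q_lists[unfolded Mn_set_def])

lemma missing_codebooks_prob_le:
  assumes "length x = n" "coverable x"
  shows "Mn_set (Mn q) {c \<in> codebooks n. set c \<inter> cond_typical x = {}} \<le> exp (- (n * \<delta> / 2))"
proof -
  let ?L = "{y :: 'a list. length y = n}" and ?G = "cond_typical x" and ?K = "codebook_size n"
  have "?G \<subseteq> ?L"
    using assms by (auto simp: cond_typical_def)
  have "0 \<le> Mn_set q ?G" "Mn_set q ?G \<le> 1"
    using Mn_set_mono[OF finite_lists_length_UNIV \<open>?G \<subseteq> ?L\<close>, of q]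
    by (simp_all add: Mn_set_nonneg q_nonneg Mn_set_q_lists)
  have "{c \<in> codebooks n. set c \<inter> ?G = {}} = {c. set c \<subseteq> ?L - ?G \<and> length c = ?K}"
    by (auto simp: codebooks_def)
  moreover have "(\<Sum>y\<in>?L - ?G. Mn q y) = 1 - Mn_set q ?G"
    using sum.subset_diff[OF \<open>?G \<subseteq> ?L\<close> finite_lists_length_UNIV, of "Mn q"] Mn_set_q_lists[of n]
    by (simp add: Mn_set_def)
  ultimately have "Mn_set (Mn q) {c \<in> codebooks n. set c \<inter> ?G = {}} = (1 - Mn_set q ?G) ^ ?K"
    using Mn_set_lists_length_eq[of "?L - ?G" "Mn q" ?K] by simp
  also have "\<dots> \<le> exp (- Mn_set q ?G) ^ ?K"
    using \<open>Mn_set q ?G \<le> 1\<close> exp_ge_add_one_self[of "- Mn_set q ?G"] by (intro power_mono) simp_all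
  also have "\<dots> = exp (- (?K * Mn_set q ?G))"
    by (simp add: exp_of_nat_mult[symmetric])
  also have "\<dots> \<le> exp (- (n * \<delta> / 2))"
  proof -
    have "exp (n * (I + 2 * \<delta>)) * (exp (- (n * (I + \<delta>))) / 2) \<le> ?K * Mn_set q ?G"
      using assms \<open>0 \<le> Mn_set q ?G\<close> unfolding codebook_size_def coverable_def
      by (intro mult_mono real_nat_ceiling_ge) (auto intro: less_trans[OF _ exp_gt_zero])
    moreover have "exp (n * (I + 2 * \<delta>)) * (exp (- (n * (I + \<delta>))) / 2) = exp (n * \<delta>) / 2"
      by (simp add: exp_add[symmetric] algebra_simps)
    moreover have "n * \<delta> \<le> exp (n * \<delta>)"
      using exp_ge_add_one_self[of "n * \<delta>"] by linarith
    ultimately show ?thesis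
      by simp
  qed
  finally show ?thesis .
qed

lemma average_missed_le: "(\<Sum>c\<in>codebooks n. Mn (Mn q) c * missed n c) \<le> exp (- (n * \<delta> / 2))"
proof -
  let ?X = "{x :: 'a list. length x = n \<and> coverable x}"
  let ?miss = "\<lambda>x c. set c \<inter> cond_typical x = {}"
  have "missed n c = (\<Sum>x\<in>?X. if ?miss x c then Mn (pmf P) x else 0)" for c
    unfolding missed_def Mn_set_def by (simp add: sum.inter_filter[symmetric] conj_assoc)
  then have "(\<Sum>c\<in>codebooks n. Mn (Mn q) c * missed n c)
      = (\<Sum>c\<in>codebooks n. \<Sum>x\<in>?X. if ?miss x c then Mn (pmf P) x * Mn (Mn q) c else 0)"
    by (simp add: sum_distrib_left if_distrib mult.commute cong: if_cong)
  also have "\<dots> = (\<Sum>x\<in>?X. Mn (pmf P) x * Mn_set (Mn q) {c \<in> codebooks n. ?miss x c})"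
    by (subst sum.swap) (simp add: Mn_set_def sum.inter_filter finite_codebooks sum_distrib_left
        if_distrib cong: if_cong)
  also have "\<dots> \<le> (\<Sum>x\<in>?X. Mn (pmf P) x * exp (- (n * \<delta> / 2)))"
    by (intro sum_mono mult_left_mono missing_codebooks_prob_le) (auto simp: Mn_nonneg)
  also have "\<dots> \<le> (\<Sum>x | length x = n. Mn (pmf P) x * exp (- (n * \<delta> / 2)))"
    by (intro sum_mono2 finite_lists_length_UNIV) (auto simp: Mn_nonneg)
  also have "\<dots> = exp (- (n * \<delta> / 2))"
    using Mn_set_lists_length_UNIV[of "pmf P" n]
    by (simp add: Mn_set_def sum_distrib_right[symmetric] sum_pmf_eq_1)
  finally show ?thesis .
qed

lemma exists_good_codebook: "\<exists>c\<in>codebooks n. missed n c \<le> exp (- (n * \<delta> / 2))"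
  using Mn_set_codebooks
  by (intro exists_le_weighted_average[where wt = "Mn (Mn q)", OF finite_codebooks _ _ average_missed_le])
    (auto simp: Mn_set_def Mn_nonneg q_nonneg)

definition code :: "nat \<Rightarrow> 'a list list \<Rightarrow> 'a list set" where
  "code n c = {y \<in> set c. (\<Sum>b\<leftarrow>y. ln (M b)) \<le> n * (E + \<delta>)}"

lemma Mn_set_code_le:
  assumes "c \<in> codebooks n" "1 \<le> n * \<delta>"
  shows "Mn_set M (code n c) \<le> exp (n * (I + E + 4 * \<delta>))"
proof -
  have "Mn M y \<le> exp (n * (E + \<delta>))" if "y \<in> code n c" for y
  proof -
    have "Mn M y = Mn (\<lambda>b. exp (ln (M b))) y"
      by (simp add: M_pos)
    then show ?thesis
      using that by (simp add: Mn_exp code_def)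
  qed
  then have "Mn_set M (code n c) \<le> card (code n c) * exp (n * (E + \<delta>))"
    unfolding Mn_set_def by (rule sum_bounded_above)
  also have "\<dots> \<le> codebook_size n * exp (n * (E + \<delta>))"
  proof -
    have "card (code n c) \<le> card (set c)"
      by (intro card_mono) (auto simp: code_def)
    also have "\<dots> \<le> codebook_size n"
      using card_length[of c] assms(1) by (simp add: codebooks_def)
    finally show ?thesis
      by simp
  qed
  also have "\<dots> \<le> exp (n * \<delta>) * exp (n * (I + 2 * \<delta>)) * exp (n * (E + \<delta>))"
  proof (intro mult_right_mono)
    have "1 \<le> exp (n * (I + 2 * \<delta>))"
      using mutual_information_nonneg \<delta>_pos by simp
    moreover have "2 \<le> exp (n * \<delta>)"
      using exp_ge_add_one_self[of "n * \<delta>"] assms(2) by linarith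
    moreover have "real (codebook_size n) \<le> exp (n * (I + 2 * \<delta>)) + 1"
      unfolding codebook_size_def by (simp add: of_nat_nat less_imp_le)
    moreover have "2 * exp (n * (I + 2 * \<delta>)) \<le> exp (n * \<delta>) * exp (n * (I + 2 * \<delta>))"
      using \<open>2 \<le> exp (n * \<delta>)\<close> by (intro mult_right_mono) auto
    ultimately show "real (codebook_size n) \<le> exp (n * \<delta>) * exp (n * (I + 2 * \<delta>))"
      by linarith
  qed simp
  also have "\<dots> = exp (n * (I + E + 4 * \<delta>))"
    by (simp add: exp_add[symmetric] algebra_simps)
  finally show ?thesis .
qed

lemma typical_imp_covered:
  assumes "c \<in> codebooks n" "y \<in> set c" "length x = n" "0 < n" "typical (zip x y)"
  shows "y \<in> code n c" "rho_n \<rho> x y \<le> D"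
proof -
  have "length y = n"
    using assms(1,2) by (auto simp: codebooks_def)
  then show "y \<in> code n c"
    using assms sum_list_snd_zip[of x y "\<lambda>b. ln (M b)"] by (simp add: code_def typical_def)
  have "(\<Sum>s\<leftarrow>zip x y. \<rho> (fst s) (snd s)) \<le> n * D"
    using assms \<open>length y = n\<close> by (simp add: typical_def)
  then show "rho_n \<rho> x y \<le> D"
    using assms \<open>length y = n\<close> by (simp add: rho_n_eq_sum_list_zip divide_le_eq mult.commute)
qed

lemma uncovered_prob_le:
  assumes "c \<in> codebooks n" "0 < n"
  shows "Mn_set (pmf P) {x. length x = n \<and> \<not> (\<exists>y\<in>code n c. rho_n \<rho> x y \<le> D)}
           \<le> 6 * exp (- (n * deviation_exponent)) + missed n c"
proof -
  let ?U = "{x :: 'a list. length x = n \<and> \<not> coverable x}"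
  let ?V = "{x :: 'a list. length x = n \<and> coverable x \<and> set c \<inter> cond_typical x = {}}"
  have "{x. length x = n \<and> \<not> (\<exists>y\<in>code n c. rho_n \<rho> x y \<le> D)} \<subseteq> ?U \<union> ?V"
    using typical_imp_covered[OF assms(1) _ _ assms(2)] by (fastforce simp: cond_typical_def)
  then have "Mn_set (pmf P) {x. length x = n \<and> \<not> (\<exists>y\<in>code n c. rho_n \<rho> x y \<le> D)}
      \<le> Mn_set (pmf P) (?U \<union> ?V)"
    by (intro Mn_set_mono) auto
  also have "\<dots> \<le> Mn_set (pmf P) ?U + Mn_set (pmf P) ?V"
    by (intro Mn_set_Un_le) auto
  also have "\<dots> \<le> 6 * exp (- (n * deviation_exponent)) + missed n c"
    using uncoverable_prob_le[of n] by (simp add: missed_def)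
  finally show ?thesis .
qed

lemma deviation_exponent_pos: "0 < deviation_exponent"
  using \<delta>_pos value_bound_ge(4) by (simp add: deviation_exponent_def)

theorem covering_codes:
  "\<exists>C :: nat \<Rightarrow> 'a list set. (\<forall>n. C n \<subseteq> {xs. length xs = n})
     \<and> (\<forall>n. Mn_set M (C n) \<le> exp (n * (I + E + 4 * \<delta>)))
     \<and> (AE \<omega> in PiM UNIV (\<lambda>_::nat. measure_pmf P).
          eventually (\<lambda>n. \<exists>y\<in>C n. rho_n \<rho> (map \<omega> [0..<n]) y \<le> D) sequentially)"
proof -
  obtain cb where cb: "\<And>n. cb n \<in> codebooks n" "\<And>n. missed n (cb n) \<le> exp (- (n * \<delta> / 2))"
    using exists_good_codebook by metis
  define N where "N = nat \<lceil>1 / \<delta>\<rceil>"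
  have large: "1 \<le> n * \<delta>" "0 < n" if "N \<le> n" for n
  proof -
    have "1 / \<delta> \<le> n"
      using that real_nat_ceiling_ge[of "1 / \<delta>"] unfolding N_def by linarith
    then show "1 \<le> n * \<delta>"
      using \<delta>_pos by (simp add: field_simps)
    then show "0 < n"
      by (cases n) auto
  qed
  define C where "C n = (if N \<le> n then code n (cb n) else {})" for n
  have "C n \<subseteq> {xs. length xs = n}" for n
    using cb(1)[of n] by (auto simp: C_def code_def codebooks_def)
  moreover have "Mn_set M (C n) \<le> exp (n * (I + E + 4 * \<delta>))" for n
    using Mn_set_code_le[OF cb(1) large(1)] by (simp add: C_def Mn_set_def)
  moreover have "summable (\<lambda>n. Mn_set (pmf P) {x. length x = n \<and> x \<notin> {x. \<exists>y\<in>C n. rho_n \<rho> x y \<le> D}})"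
  proof (rule summable_comparison_test')
    show "summable (\<lambda>n. 6 * exp (- deviation_exponent) ^ n + exp (- \<delta> / 2) ^ n)"
      using deviation_exponent_pos \<delta>_pos by (intro summable_add summable_mult summable_geometric) auto
    show "norm (Mn_set (pmf P) {x. length x = n \<and> x \<notin> {x. \<exists>y\<in>C n. rho_n \<rho> x y \<le> D}})
        \<le> 6 * exp (- deviation_exponent) ^ n + exp (- \<delta> / 2) ^ n" if "N \<le> n" for n
      using uncovered_prob_le[OF cb(1) large(2)[OF that]] cb(2)[of n] that
      by (simp add: C_def Mn_set_nonneg exp_of_nat_mult[symmetric])
  qed
  from AE_eventually_prefix_in[OF this]
  have "AE \<omega> in PiM UNIV (\<lambda>_::nat. measure_pmf P).
      eventually (\<lambda>n. \<exists>y\<in>C n. rho_n \<rho> (map \<omega> [0..<n]) y \<le> D) sequentially"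
    by simp
  ultimately show ?thesis
    by blast
qed

end

section \<open>Near-optimal test channels\<close>

lemma pmf_map_fst: "pmf (map_pmf fst W) = fst_marginal (pmf W)"
  and pmf_map_snd: "pmf (map_pmf snd W) = snd_marginal (pmf W)"
  for W :: "('a::finite \<times> 'b::finite) pmf"
proof -
  have preimages: "fst -` {a} = Pair a ` UNIV" "snd -` {b} = (\<lambda>a. (a, b)) ` UNIV"
    for a :: 'a and b :: 'b
    by auto
  show "pmf (map_pmf fst W) = fst_marginal (pmf W)" "pmf (map_pmf snd W) = snd_marginal (pmf W)"
    by (auto intro!: ext simp: pmf_map measure_measure_pmf_finite preimages sum.reindex inj_on_def
        fst_marginal_def snd_marginal_def simp del: vimage_singleton_eq)
qed

lemma expectation_eq_sum: "measure_pmf.expectation Q f = (\<Sum>a\<in>UNIV. pmf Q a * f a)"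
  for Q :: "'a::finite pmf" and f :: "'a \<Rightarrow> real"
  by (subst integral_measure_pmf_real[of UNIV]) (auto simp: mult.commute)

lemma rel_ent_eq_sum:
  "rel_ent \<mu> \<nu> \<noteq> \<infinity> \<Longrightarrow> rel_ent \<mu> \<nu> = ereal (\<Sum>s\<in>UNIV. pmf \<mu> s * ln (pmf \<mu> s / pmf \<nu> s))"
  by (auto simp: rel_ent_def split: if_splits intro!: sum.cong)

lemma rel_ent_nonneg: "0 \<le> rel_ent \<mu> \<nu>"
proof (cases "rel_ent \<mu> \<nu> = \<infinity>")
  case False
  then have support: "0 < pmf \<nu> s" if "0 < pmf \<mu> s" for s
    using that pmf_nonneg[of \<nu> s] by (auto simp: rel_ent_def split: if_splits)
  have "sum (pmf \<mu>) UNIV * ln (sum (pmf \<mu>) UNIV / sum (pmf \<nu>) UNIV)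
      \<le> (\<Sum>s\<in>UNIV. pmf \<mu> s * ln (pmf \<mu> s / pmf \<nu> s))"
    using support by (intro log_sum_inequality) auto
  then show ?thesis
    using False by (simp add: rel_ent_eq_sum sum_pmf_eq_1)
qed simp

lemma I_PQD_nonneg: "0 \<le> I_PQD P Q \<rho> D"
  unfolding I_PQD_def by (rule INF_greatest) (rule rel_ent_nonneg)

lemma R_fun_lower_bound: "ereal (Min (range (\<lambda>b. ln (M b)))) \<le> R_fun P M \<rho> D"
  unfolding R_fun_def
proof (rule INF_greatest)
  fix Q :: "'a pmf"
  have "(\<Sum>b\<in>UNIV. pmf Q b * Min (range (\<lambda>b. ln (M b)))) \<le> (\<Sum>b\<in>UNIV. pmf Q b * ln (M b))"
    by (intro sum_mono mult_left_mono) auto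
  then have "Min (range (\<lambda>b. ln (M b))) \<le> measure_pmf.expectation Q (\<lambda>b. ln (M b))"
    by (simp add: expectation_eq_sum sum_distrib_right[symmetric] sum_pmf_eq_1)
  then show "ereal (Min (range (\<lambda>b. ln (M b))))
      \<le> I_PQD P Q \<rho> D + ereal (measure_pmf.expectation Q (\<lambda>b. ln (M b)))"
    using add_mono[OF I_PQD_nonneg[of P Q \<rho> D]] by fastforce
qed

lemma near_optimal_coupling:
  fixes P :: "'a::finite pmf"
  assumes "R_fun P M \<rho> D < ereal t"
  shows "\<exists>W. map_pmf fst W = P \<and> mean_distortion \<rho> (pmf W) \<le> D
           \<and> mutual_information (pmf W) + mean_log_mass M (pmf W) < t"
proof -
  obtain Q where "I_PQD P Q \<rho> D + ereal (measure_pmf.expectation Q (\<lambda>b. ln (M b))) < ereal t"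
    using assms by (auto simp: R_fun_def INF_less_iff)
  then have "I_PQD P Q \<rho> D < ereal (t - measure_pmf.expectation Q (\<lambda>b. ln (M b)))"
    by (cases "I_PQD P Q \<rho> D") auto
  then obtain W where W: "W \<in> couplings P Q \<rho> D"
    and less: "rel_ent W (pair_pmf P Q) < ereal (t - measure_pmf.expectation Q (\<lambda>b. ln (M b)))"
    by (auto simp: I_PQD_def INF_less_iff)
  then have marginals: "fst_marginal (pmf W) = pmf P" "snd_marginal (pmf W) = pmf Q"
    by (auto simp: couplings_def pmf_map_fst[symmetric] pmf_map_snd[symmetric])
  have "pmf (pair_pmf P Q) s = pmf P (fst s) * pmf Q (snd s)" for s
    by (cases s) (simp add: pmf_pair)
  then have "rel_ent W (pair_pmf P Q) = ereal (mutual_information (pmf W))"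
    using less by (subst rel_ent_eq_sum) (auto simp: mutual_information_def marginals)
  moreover have "measure_pmf.expectation Q (\<lambda>b. ln (M b)) = mean_log_mass M (pmf W)"
  proof -
    have "measure_pmf.expectation Q (\<lambda>b. ln (M b)) = (\<Sum>b\<in>UNIV. \<Sum>a\<in>UNIV. pmf W (a, b) * ln (M b))"
      by (simp add: expectation_eq_sum snd_marginal_def sum_distrib_right flip: marginals(2))
    also have "\<dots> = mean_log_mass M (pmf W)"
      unfolding mean_log_mass_def sum_UNIV_prod by (subst sum.swap) simp
    finally show ?thesis .
  qed
  moreover have "mean_distortion \<rho> (pmf W) \<le> D"
    using W by (simp add: couplings_def expectation_eq_sum mean_distortion_def split_beta)
  ultimately show ?thesis
    using W less by (auto simp: couplings_def)
qed

lemma fst_marginal_mix: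
  "fst_marginal (\<lambda>s. (1 - \<theta>) * w1 s + \<theta> * w2 s) a = (1 - \<theta>) * fst_marginal w1 a + \<theta> * fst_marginal w2 a"
  by (simp add: fst_marginal_def sum.distrib sum_distrib_left)

lemma snd_marginal_mix:
  "snd_marginal (\<lambda>s. (1 - \<theta>) * w1 s + \<theta> * w2 s) b = (1 - \<theta>) * snd_marginal w1 b + \<theta> * snd_marginal w2 b"
  by (simp add: snd_marginal_def sum.distrib sum_distrib_left)

lemma mean_log_mass_mix:
  "mean_log_mass M (\<lambda>s. (1 - \<theta>) * w1 s + \<theta> * w2 s)
     = (1 - \<theta>) * mean_log_mass M w1 + \<theta> * mean_log_mass M w2"
  unfolding mean_log_mass_def sum_distrib_left sum.distrib[symmetric]
  by (rule sum.cong) (simp_all add: algebra_simps)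

lemma mutual_information_mix_le:
  fixes w1 w2 :: "'a::finite \<times> 'b::finite \<Rightarrow> real"
  assumes w1_nonneg: "\<And>s. 0 \<le> w1 s" and w2_nonneg: "\<And>s. 0 \<le> w2 s"
    and same_input: "fst_marginal w1 = fst_marginal w2" and "0 \<le> \<theta>" "\<theta> \<le> 1"
  shows "mutual_information (\<lambda>s. (1 - \<theta>) * w1 s + \<theta> * w2 s)
           \<le> (1 - \<theta>) * mutual_information w1 + \<theta> * mutual_information w2"
proof -
  let ?w = "\<lambda>s. (1 - \<theta>) * w1 s + \<theta> * w2 s"
  let ?p = "fst_marginal w1" and ?q1 = "snd_marginal w1" and ?q2 = "snd_marginal w2"
  have p: "fst_marginal ?w = ?p"
    unfolding fst_marginal_mix[abs_def] same_input by (simp add: algebra_simps)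
  have "?w s * ln (?w s / (?p (fst s) * snd_marginal ?w (snd s)))
      \<le> (1 - \<theta>) * (w1 s * ln (w1 s / (?p (fst s) * ?q1 (snd s))))
        + \<theta> * (w2 s * ln (w2 s / (?p (fst s) * ?q2 (snd s))))" for s
  proof -
    have "?p (fst s) * snd_marginal ?w (snd s)
        = (1 - \<theta>) * (?p (fst s) * ?q1 (snd s)) + \<theta> * (?p (fst s) * ?q2 (snd s))"
      unfolding snd_marginal_mix by (simp add: algebra_simps)
    moreover have "0 \<le> ?p a" "0 \<le> ?q1 b" "0 \<le> ?q2 b" for a b
      using w1_nonneg w2_nonneg by (simp_all add: fst_marginal_def snd_marginal_def sum_nonneg)
    moreover have "0 < ?p (fst s) * ?q1 (snd s)" if "0 < w1 s"
      using that le_fst_marginal[of w1 s] le_snd_marginal[of w1 s] w1_nonneg by simp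
    moreover have "0 < ?p (fst s) * ?q2 (snd s)" if "0 < w2 s"
      using that le_fst_marginal[of w2 s] le_snd_marginal[of w2 s] w2_nonneg same_input by simp
    ultimately show ?thesis
      using assms by (simp add: mult_ln_divide_convex)
  qed
  then have "mutual_information ?w \<le> (\<Sum>s\<in>UNIV. (1 - \<theta>) * (w1 s * ln (w1 s / (?p (fst s) * ?q1 (snd s))))
      + \<theta> * (w2 s * ln (w2 s / (?p (fst s) * ?q2 (snd s)))))"
    unfolding mutual_information_def p by (rule sum_mono)
  then show ?thesis
    by (simp add: mutual_information_def same_input sum.distrib sum_distrib_left)
qed

definition diagonal_coupling :: "'a pmf \<Rightarrow> 'a \<times> 'a \<Rightarrow> real" where
  "diagonal_coupling P s = (if fst s = snd s then pmf P (fst s) else 0)"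

lemma fst_marginal_diagonal_coupling: "fst_marginal (diagonal_coupling P) = pmf P"
  for P :: "'a::finite pmf"
  by (auto simp: fst_marginal_def diagonal_coupling_def)

lemma diagonal_mixture_distortion:
  fixes W :: "('a::finite \<times> 'a) pmf" and P :: "'a pmf"
  assumes rho_nonneg: "\<And>x y. 0 \<le> \<rho> x y" and rho_diag: "\<And>a. \<rho> a a = 0"
    and W: "mean_distortion \<rho> (pmf W) \<le> D" and "0 < \<theta>" "\<theta> < 1"
  defines "w \<equiv> \<lambda>s. (1 - \<theta>) * pmf W s + \<theta> * diagonal_coupling P s"
  shows "mean_distortion \<rho> w + \<theta> * D \<le> D"
    and "D = 0 \<Longrightarrow> 0 < w s \<Longrightarrow> \<rho> (fst s) (snd s) \<le> D"
proof -
  have "w t * \<rho> (fst t) (snd t) = (1 - \<theta>) * (pmf W t * \<rho> (fst t) (snd t))" for t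
    using rho_diag by (simp add: w_def diagonal_coupling_def algebra_simps)
  then have "mean_distortion \<rho> w = (1 - \<theta>) * mean_distortion \<rho> (pmf W)"
    unfolding mean_distortion_def sum_distrib_left by (rule sum.cong[OF refl])
  then show "mean_distortion \<rho> w + \<theta> * D \<le> D"
    using W \<open>\<theta> < 1\<close> mult_left_mono[OF W, of "1 - \<theta>"] by (simp add: algebra_simps)
  assume "D = 0" "0 < w s"
  have terms_nonneg: "0 \<le> pmf W t * \<rho> (fst t) (snd t)" for t
    by (simp add: rho_nonneg)
  then have "0 \<le> mean_distortion \<rho> (pmf W)"
    unfolding mean_distortion_def by (intro sum_nonneg)
  then have "mean_distortion \<rho> (pmf W) = 0"
    using W \<open>D = 0\<close> by simp
  then have "pmf W t * \<rho> (fst t) (snd t) = 0" for t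
    using sum_nonneg_eq_0_iff[of UNIV "\<lambda>t. pmf W t * \<rho> (fst t) (snd t)"] terms_nonneg
    unfolding mean_distortion_def by (cases t) auto
  moreover have "0 < pmf W s \<or> fst s = snd s"
    using \<open>0 < w s\<close> \<open>\<theta> < 1\<close> pmf_nonneg[of W s]
    by (auto simp: w_def diagonal_coupling_def zero_less_mult_iff split: if_splits)
  ultimately show "\<rho> (fst s) (snd s) \<le> D"
    using \<open>D = 0\<close> rho_diag by (metis less_eq_real_def mult_eq_0_iff not_less)
qed

lemma exists_small_weight: "0 < \<epsilon> \<Longrightarrow> \<exists>\<theta>. 0 < \<theta> \<and> \<theta> < 1 \<and> \<theta> * Z \<le> \<epsilon>"
  for \<epsilon> Z :: real
proof (intro exI conjI)
  let ?\<theta> = "min (1 / 2) (\<epsilon> / (1 + \<bar>Z\<bar>))"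
  assume "0 < \<epsilon>"
  then show "0 < ?\<theta>" "?\<theta> < 1"
    by auto
  have "?\<theta> * Z \<le> ?\<theta> * (1 + \<bar>Z\<bar>)"
    using \<open>0 < ?\<theta>\<close> by (intro mult_left_mono) auto
  also have "\<dots> \<le> \<epsilon> / (1 + \<bar>Z\<bar>) * (1 + \<bar>Z\<bar>)"
    by (intro mult_right_mono) auto
  finally show "?\<theta> * Z \<le> \<epsilon>"
    by (simp add: add_pos_nonneg)
qed

lemma exists_test_channel:
  fixes P :: "'a::finite pmf"
  assumes rho_nonneg: "\<And>x y. 0 \<le> \<rho> x y" and rho_diag: "\<And>a. \<rho> a a = 0"
    and M_pos: "\<And>a. 0 < M a" and "0 \<le> D" and R: "R_fun P M \<rho> D = ereal r" and "0 < \<epsilon>"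
  shows "\<exists>w \<delta>. test_channel P w \<rho> M D \<delta> \<and> mutual_information w + mean_log_mass M w + 4 * \<delta> \<le> r + \<epsilon>"
proof -
  obtain W where W: "map_pmf fst W = P" "mean_distortion \<rho> (pmf W) \<le> D"
    and W_rate: "mutual_information (pmf W) + mean_log_mass M (pmf W) < r + \<epsilon> / 2"
    using near_optimal_coupling[of P M \<rho> D "r + \<epsilon> / 2"] R \<open>0 < \<epsilon>\<close> by auto
  let ?V = "diagonal_coupling P"
  obtain \<theta> where "0 < \<theta>" "\<theta> < 1" and \<theta>_small: "\<theta> * (mutual_information ?V + mean_log_mass M ?V
      - (mutual_information (pmf W) + mean_log_mass M (pmf W))) \<le> \<epsilon> / 4"
    using exists_small_weight[of "\<epsilon> / 4"] \<open>0 < \<epsilon>\<close> by auto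
  define w where "w = (\<lambda>s. (1 - \<theta>) * pmf W s + \<theta> * ?V s)"
  have V_nonneg: "0 \<le> ?V s" for s
    by (simp add: diagonal_coupling_def)
  have same_input: "fst_marginal (pmf W) = fst_marginal ?V"
    using W(1) by (simp add: fst_marginal_diagonal_coupling flip: pmf_map_fst)
  have "mutual_information w + mean_log_mass M w \<le> r + 3 * \<epsilon> / 4"
    unfolding w_def mean_log_mass_mix
    using mutual_information_mix_le[OF pmf_nonneg V_nonneg same_input, of \<theta>] W_rate \<theta>_small
      \<open>0 < \<theta>\<close> \<open>\<theta> < 1\<close> by (simp add: algebra_simps)
  moreover define \<delta> where "\<delta> = (if 0 < D then min (\<epsilon> / 16) (\<theta> * D) else \<epsilon> / 16)"
  moreover have "test_channel P w \<rho> M D \<delta>"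
  proof
    show "0 \<le> w s" for s
      using \<open>\<theta> < 1\<close> \<open>0 < \<theta>\<close> V_nonneg[of s] by (simp add: w_def)
    show "fst_marginal w = pmf P"
      unfolding w_def fst_marginal_mix[abs_def] same_input fst_marginal_diagonal_coupling
      by (simp add: algebra_simps)
    show "0 < \<delta>"
      using \<open>0 < \<epsilon>\<close> \<open>0 < \<theta>\<close> by (simp add: \<delta>_def)
    show "mean_distortion \<rho> w + \<delta> \<le> D \<or> (\<forall>s. 0 < w s \<longrightarrow> \<rho> (fst s) (snd s) \<le> D)"
      using diagonal_mixture_distortion[OF rho_nonneg rho_diag W(2) \<open>0 < \<theta>\<close> \<open>\<theta> < 1\<close>, where P = P]
        \<open>0 \<le> D\<close> by (auto simp: \<delta>_def w_def)
  qed (rule M_pos)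
  moreover have "\<delta> \<le> \<epsilon> / 16"
    unfolding \<delta>_def using min.cobounded1[of "\<epsilon> / 16" "\<theta> * D"] by simp
  ultimately show ?thesis
    by (intro exI[of _ w] exI[of _ \<delta>]) simp
qed

lemma ln_divide_le_of_le_exp:
  fixes x a :: real
  assumes "0 < x" "x \<le> exp (n * a)" "0 < n"
  shows "ln x / n \<le> a"
  using assms ln_le_cancel_iff[of x "exp (n * a)"] by (simp add: divide_le_eq mult.commute)

lemma rho_n_self: "(\<And>a. \<rho> a a = 0) \<Longrightarrow> rho_n \<rho> x x = 0"
  by (simp add: rho_n_def)

theorem theorem2:
  fixes P :: "('a::finite) pmf" and \<rho> :: "'a \<Rightarrow> 'a \<Rightarrow> real" and M :: "'a \<Rightarrow> real"
    and D \<epsilon> :: real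
  assumes P_pos: "\<And>a. pmf P a > 0"
    and rho_nonneg: "\<And>x y. \<rho> x y \<ge> 0"
    and M_pos: "\<And>a. M a > 0"
    and rho_zero: "\<And>x y. \<rho> x y = 0 \<longleftrightarrow> x = y"
    and D: "D \<ge> 0" and eps: "\<epsilon> > 0"
  shows "\<exists>C :: nat \<Rightarrow> 'a list set.
           (\<forall>n\<ge>1. C n \<subseteq> {xs. length xs = n}) \<and>
           (\<forall>n\<ge>1. Mn_set M (C n) > 0 \<longrightarrow>
               ereal (ln (Mn_set M (C n)) / real n) \<le> R_fun P M \<rho> D + ereal \<epsilon>) \<and>
           (AE \<omega> in PiM UNIV (\<lambda>_::nat. measure_pmf P).
               eventually (\<lambda>n. \<exists>y\<in>C n. rho_n \<rho> (map \<omega> [0..<n]) y \<le> D) sequentially)"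
proof (cases "R_fun P M \<rho> D")
  case (real r)
  obtain w \<delta> where channel: "test_channel P w \<rho> M D \<delta>"
    and rate: "mutual_information w + mean_log_mass M w + 4 * \<delta> \<le> r + \<epsilon>"
    using exists_test_channel[OF rho_nonneg _ M_pos D real eps] rho_zero by blast
  then obtain C where "\<forall>n. C n \<subseteq> {xs. length xs = n}"
    and "\<forall>n. Mn_set M (C n) \<le> exp (n * (mutual_information w + mean_log_mass M w + 4 * \<delta>))"
    and "AE \<omega> in PiM UNIV (\<lambda>_::nat. measure_pmf P).
           eventually (\<lambda>n. \<exists>y\<in>C n. rho_n \<rho> (map \<omega> [0..<n]) y \<le> D) sequentially"
    using test_channel.covering_codes by blast
  then show ?thesis
    using real rate by (intro exI[of _ C]) (auto dest: ln_divide_le_of_le_exp)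
next
  case PInf
  have "rho_n \<rho> x x \<le> D" for x
    using D rho_zero by (simp add: rho_n_self)
  then show ?thesis
    using PInf by (intro exI[of _ "\<lambda>n. {xs. length xs = n}"]) (fastforce intro!: always_eventually)
next
  case MInf
  then show ?thesis
    using R_fun_lower_bound[of M P \<rho> D] by simp
qed

end
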